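(* Let $n\ge5$ and $c\ge1$. Then the commutator subgroup $UW_n(c)'$ is perfect, i.e. $[UW_n(c)',UW_n(c)']=UW_n(c)'$.
   Context: $UV_n(c)$ ($n\ge2$, $c\ge1$) is the group with generators $\rho_i$ ($1\le i\le n-1$), $\sigma_{i,t}$ ($1\le i\le n-1$, $1\le t\le c$) and relations $\rho_i\rho_{i+1}\rho_i=\rho_{i+1}\rho_i\rho_{i+1}$ ($1\le i\le n-2$), $\rho_i\rho_j=\rho_j\rho_i$ ($|i-j|\ge2$), $\rho_i^2=1$, $\sigma_{i,t}\sigma_{j,\ell}=\sigma_{j,\ell}\sigma_{i,t}$ ($|i-j|\ge2$, $1\le t,\ell\le c$), $\sigma_{i,t}\rho_j=\rho_j\sigma_{i,t}$ ($|i-j|\ge2$), $\rho_i\rho_{i+1}\sigma_{i,t}=\sigma_{i+1,t}\rho_i\rho_{i+1}$ ($1\le i\le n-2$, $1\le t\le c$). The universal welded braid group $UW_n(c)$ is the quotient of $UV_n(c)$ by the additional relations $\rho_i\sigma_{i+1,t}\sigma_{i,t}=\sigma_{i+1,t}\sigma_{i,t}\rho_{i+1}$ for all $1\le i\le n-2$, $1\le t\le c$. *)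

theory Defs
  imports "HOL-Algebra.Algebra"
begin

text \<open>Generators: Rho i stands for rho_i, Sig i t stands for sigma_{i,t}.
  Indices are 1-based as in the paper.\<close>

datatype gen = Rho nat | Sig nat nat

definition valid_gen :: "nat \<Rightarrow> nat \<Rightarrow> gen \<Rightarrow> bool" where
  "valid_gen n c g = (case g of
      Rho i \<Rightarrow> 1 \<le> i \<and> i \<le> n - 1
    | Sig i t \<Rightarrow> 1 \<le> i \<and> i \<le> n - 1 \<and> 1 \<le> t \<and> t \<le> c)"

text \<open>Words in the free group: letters are (generator, exponent sign), True = +1, False = -1.\<close>

type_synonym word = "(gen \<times> bool) list"

definition valid_word :: "nat \<Rightarrow> nat \<Rightarrow> word \<Rightarrow> bool" where
  "valid_word n c w = (\<forall>x \<in> set w. valid_gen n c (fst x))"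

definition g :: "gen \<Rightarrow> word" where
  "g x = [(x, True)]"

definition uv_rels :: "nat \<Rightarrow> nat \<Rightarrow> (word \<times> word) set" where
  "uv_rels n c =
     {(g (Rho i) @ g (Rho (i+1)) @ g (Rho i), g (Rho (i+1)) @ g (Rho i) @ g (Rho (i+1))) | i.
        1 \<le> i \<and> i \<le> n - 2}
   \<union> {(g (Rho i) @ g (Rho j), g (Rho j) @ g (Rho i)) | i j.
        1 \<le> i \<and> i \<le> n - 1 \<and> 1 \<le> j \<and> j \<le> n - 1 \<and> (i \<ge> j + 2 \<or> j \<ge> i + 2)}
   \<union> {(g (Rho i) @ g (Rho i), []) | i. 1 \<le> i \<and> i \<le> n - 1}
   \<union> {(g (Sig i t) @ g (Sig j l), g (Sig j l) @ g (Sig i t)) | i j t l.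
        1 \<le> i \<and> i \<le> n - 1 \<and> 1 \<le> j \<and> j \<le> n - 1 \<and> (i \<ge> j + 2 \<or> j \<ge> i + 2)
        \<and> 1 \<le> t \<and> t \<le> c \<and> 1 \<le> l \<and> l \<le> c}
   \<union> {(g (Sig i t) @ g (Rho j), g (Rho j) @ g (Sig i t)) | i j t.
        1 \<le> i \<and> i \<le> n - 1 \<and> 1 \<le> j \<and> j \<le> n - 1 \<and> (i \<ge> j + 2 \<or> j \<ge> i + 2)
        \<and> 1 \<le> t \<and> t \<le> c}
   \<union> {(g (Rho i) @ g (Rho (i+1)) @ g (Sig i t), g (Sig (i+1) t) @ g (Rho i) @ g (Rho (i+1))) | i t.
        1 \<le> i \<and> i \<le> n - 2 \<and> 1 \<le> t \<and> t \<le> c}"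

definition uw_rels :: "nat \<Rightarrow> nat \<Rightarrow> (word \<times> word) set" where
  "uw_rels n c = uv_rels n c
   \<union> {(g (Rho i) @ g (Sig (i+1) t) @ g (Sig i t), g (Sig (i+1) t) @ g (Sig i t) @ g (Rho (i+1))) | i t.
        1 \<le> i \<and> i \<le> n - 2 \<and> 1 \<le> t \<and> t \<le> c}"

inductive pres_eqv :: "(gen \<Rightarrow> bool) \<Rightarrow> (word \<times> word) set \<Rightarrow> word \<Rightarrow> word \<Rightarrow> bool"
  for V :: "gen \<Rightarrow> bool" and R :: "(word \<times> word) set" where
  rel: "(u, v) \<in> R \<Longrightarrow> pres_eqv V R u v"
| cancel: "V x \<Longrightarrow> pres_eqv V R [(x, b), (x, \<not> b)] []"
| refl: "\<forall>y \<in> set w. V (fst y) \<Longrightarrow> pres_eqv V R w w"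
| sym: "pres_eqv V R u v \<Longrightarrow> pres_eqv V R v u"
| trans: "pres_eqv V R u v \<Longrightarrow> pres_eqv V R v w \<Longrightarrow> pres_eqv V R u w"
| ctxt: "pres_eqv V R u v \<Longrightarrow> \<forall>y \<in> set a. V (fst y) \<Longrightarrow> \<forall>y \<in> set b. V (fst y)
         \<Longrightarrow> pres_eqv V R (a @ u @ b) (a @ v @ b)"

definition presented_group :: "(gen \<Rightarrow> bool) \<Rightarrow> (word \<times> word) set \<Rightarrow> word set monoid" where
  "presented_group V R =
     \<lparr> carrier = {w. \<forall>y \<in> set w. V (fst y)} // {(u, v). pres_eqv V R u v},
       monoid.mult = (\<lambda>A B. {w. \<exists>u\<in>A. \<exists>v\<in>B. pres_eqv V R w (u @ v)}),
       one = {w. pres_eqv V R w []} \<rparr>"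

definition UV :: "nat \<Rightarrow> nat \<Rightarrow> word set monoid" where
  "UV n c = presented_group (valid_gen n c) (uv_rels n c)"

definition UW :: "nat \<Rightarrow> nat \<Rightarrow> word set monoid" where
  "UW n c = presented_group (valid_gen n c) (uw_rels n c)"

end

theory Submission
  imports Defs
begin

text \<open>Let \<open>G\<close> be generated by images of the \<open>\<rho>\<^sub>i\<close> and \<open>\<sigma>\<^bsub>i,t\<^esub>\<close> satisfying the
  relations of \<open>UV\<^sub>n(c)\<close>, and let \<open>Q = G/G''\<close>; then
  \<open>Q'\<close> is abelian. The braid relation makes \<open>\<rho>\<^bsub>i+1\<^esub>\<close> a conjugate of \<open>\<rho>\<^sub>i\<close>, so all
  quotients \<open>\<rho>\<^sub>i \<rho>\<^sub>k\<^sup>-\<^sup>1\<close> lie in \<open>Q'\<close>. If \<open>\<rho>\<^sub>k\<close> commutes with \<open>\<rho>\<^sub>i\<close> and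
  \<open>\<rho>\<^bsub>i+1\<^esub>\<close>, then the commuting of \<open>\<rho>\<^sub>i \<rho>\<^sub>k\<^sup>-\<^sup>1\<close> and \<open>\<rho>\<^bsub>i+1\<^esub> \<rho>\<^sub>k\<^sup>-\<^sup>1\<close> forces
  \<open>\<rho>\<^sub>i\<close> and \<open>\<rho>\<^bsub>i+1\<^esub>\<close> to commute, and the braid relation turns this into
  \<open>\<rho>\<^sub>i = \<rho>\<^bsub>i+1\<^esub>\<close>; \<open>n \<ge> 5\<close> leaves enough room for such \<open>k\<close>. Hence all \<open>\<rho>\<^sub>i\<close>
  coincide in \<open>Q\<close>, the mixed relation makes \<open>\<sigma>\<^bsub>i,t\<^esub>\<close> independent of \<open>i\<close>, and the far
  commutation relations make all generators commute. So \<open>Q\<close> is abelian, i.e. \<open>G' \<subseteq> G''\<close>.\<close>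

context group
begin

lemma braid_relation_commuting_eq:
  assumes "a \<in> carrier G" "b \<in> carrier G"
    and "a \<otimes> (b \<otimes> a) = b \<otimes> (a \<otimes> b)" and "a \<otimes> b = b \<otimes> a"
  shows "a = b"
proof -
  have "a \<otimes> (a \<otimes> b) = b \<otimes> (a \<otimes> b)"
    using assms(3,4) by simp
  then show ?thesis
    using assms(1,2) r_cancel by (simp add: m_assoc[symmetric])
qed

lemma inv_commute:
  assumes "x \<in> carrier G" "y \<in> carrier G" "x \<otimes> y = y \<otimes> x"
  shows "inv x \<otimes> y = y \<otimes> inv x"
proof -
  have "inv x \<otimes> y = inv x \<otimes> (y \<otimes> x) \<otimes> inv x"
    using assms(1,2) by (simp add: m_assoc)
  also have "\<dots> = inv x \<otimes> (x \<otimes> y) \<otimes> inv x"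
    using assms(3) by simp
  also have "\<dots> = y \<otimes> inv x"
    using assms(1,2) by (simp add: m_assoc[symmetric])
  finally show ?thesis .
qed

lemma commute_if_quotients_commute:
  assumes carr: "a \<in> carrier G" "b \<in> carrier G" "c \<in> carrier G"
    and ac: "a \<otimes> c = c \<otimes> a" and bc: "b \<otimes> c = c \<otimes> b"
    and "(a \<otimes> inv c) \<otimes> (b \<otimes> inv c) = (b \<otimes> inv c) \<otimes> (a \<otimes> inv c)"
  shows "a \<otimes> b = b \<otimes> a"
proof -
  have reorder: "x \<otimes> inv c \<otimes> (y \<otimes> inv c) = x \<otimes> y \<otimes> inv c \<otimes> inv c"
    if "x \<in> carrier G" "y \<in> carrier G" "y \<otimes> c = c \<otimes> y" for x y
  proof -
    have "x \<otimes> inv c \<otimes> (y \<otimes> inv c) = x \<otimes> (inv c \<otimes> y) \<otimes> inv c"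
      using that carr(3) by (simp add: m_assoc)
    also have "\<dots> = x \<otimes> y \<otimes> inv c \<otimes> inv c"
      using that carr(3) inv_commute[of c y] by (simp add: m_assoc)
    finally show ?thesis .
  qed
  have "a \<otimes> b \<otimes> inv c \<otimes> inv c = b \<otimes> a \<otimes> inv c \<otimes> inv c"
    using assms(6) carr ac bc by (simp add: reorder)
  then show ?thesis
    using carr by (simp add: r_cancel)
qed

lemma rcos_eq_iff:
  assumes "subgroup H G" "x \<in> carrier G" "y \<in> carrier G"
  shows "H #> x = H #> y \<longleftrightarrow> x \<otimes> inv y \<in> H"
  using assms repr_independence repr_independenceD subgroup.rcos_module[OF _ is_group]
  by metis

lemma rcos_derived_conjugate:
  assumes "k \<in> carrier G" "y \<in> carrier G"
  shows "derived G (carrier G) #> (k \<otimes> y \<otimes> inv k) = derived G (carrier G) #> y"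
proof -
  have "k \<otimes> y \<otimes> inv k \<otimes> inv y \<in> derived G (carrier G)"
    using assms unfolding derived_def by (blast intro: generate.incl)
  then show ?thesis
    using assms by (simp add: rcos_eq_iff derived_is_subgroup)
qed

lemma commute_if_commutator_eq_one:
  assumes "a \<in> carrier G" "b \<in> carrier G" "a \<otimes> b \<otimes> inv a \<otimes> inv b = \<one>"
  shows "a \<otimes> b = b \<otimes> a"
  using assms by (simp add: inv_solve_right')

lemma comm_group_if_generated_by_commuting:
  assumes gen: "generate G S = carrier G" and "S \<subseteq> carrier G"
    and comm: "\<And>x y. x \<in> S \<Longrightarrow> y \<in> S \<Longrightarrow> x \<otimes> y = y \<otimes> x"
  shows "comm_group G"
proof -
  define centralizer where "centralizer T = {x \<in> carrier G. \<forall>y \<in> T. x \<otimes> y = y \<otimes> x}" for T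
  have subgroup_centralizer: "subgroup (centralizer T) G" if "T \<subseteq> carrier G" for T
  proof (rule subgroupI)
    show "centralizer T \<subseteq> carrier G" "centralizer T \<noteq> {}"
      using that by (auto simp: centralizer_def intro!: exI[of _ \<one>])
  next
    fix x assume "x \<in> centralizer T"
    then show "inv x \<in> centralizer T"
      using that unfolding centralizer_def
      by (auto intro: inv_commute)
  next
    fix x y assume "x \<in> centralizer T" "y \<in> centralizer T"
    then show "x \<otimes> y \<in> centralizer T"
      using that unfolding centralizer_def by (auto simp: m_assoc) (metis m_assoc subsetD)
  qed
  have "S \<subseteq> centralizer S"
    using assms(2) comm by (auto simp: centralizer_def)
  then have "carrier G \<subseteq> centralizer S"
    using generate_subgroup_incl subgroup_centralizer[OF assms(2)] gen by metis
  then have "S \<subseteq> centralizer (carrier G)"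
    using assms(2) by (auto simp: centralizer_def)
  then have "carrier G \<subseteq> centralizer (carrier G)"
    using generate_subgroup_incl subgroup_centralizer[OF subset_refl] gen by metis
  then show ?thesis
    by (intro group_comm_groupI) (auto simp: centralizer_def)
qed

end

definition metabelian :: "('a, 'b) monoid_scheme \<Rightarrow> bool" where
  "metabelian G \<longleftrightarrow> derived G (derived G (carrier G)) = {\<one>\<^bsub>G\<^esub>}"

context group
begin

lemma metabelian_derived_commute:
  assumes "metabelian G" "x \<in> derived G (carrier G)" "y \<in> derived G (carrier G)"
  shows "x \<otimes> y = y \<otimes> x"
proof (rule commute_if_commutator_eq_one)
  show "x \<in> carrier G" "y \<in> carrier G"
    using assms(2,3) derived_in_carrier by auto
  have "x \<otimes> y \<otimes> inv x \<otimes> inv y \<in> derived G (derived G (carrier G))"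
    using assms(2,3) unfolding derived_def[of G "derived G (carrier G)"]
    by (blast intro: generate.incl)
  then show "x \<otimes> y \<otimes> inv x \<otimes> inv y = \<one>"
    using assms(1) by (simp add: metabelian_def)
qed

lemma metabelian_Mod_derived_derived:
  "metabelian (G Mod derived G (derived G (carrier G)))"
proof -
  let ?E = "derived G (derived G (carrier G))"
  interpret E: normal ?E G
    using derived_is_normal[OF derived_self_is_normal] .
  interpret Q: group "G Mod ?E"
    by (rule E.factorgroup_is_group)
  interpret h: group_hom G "G Mod ?E" "\<lambda>a. ?E #> a"
    by unfold_locales (rule E.r_coset_hom_Mod)
  have "derived (G Mod ?E) (carrier (G Mod ?E)) = (\<lambda>a. ?E #> a) ` derived G (carrier G)"
    unfolding carrier_FactGroup by (rule h.derived_img) (rule subset_refl)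
  then have "derived (G Mod ?E) (derived (G Mod ?E) (carrier (G Mod ?E))) = (\<lambda>a. ?E #> a) ` ?E"
    using h.derived_img[OF derived_in_carrier[OF subset_refl]] by simp
  \<comment> \<open>Plain \<open>refl\<close> would refer to the rule \<open>pres_eqv.refl\<close> of the presentation.\<close>
  also have "\<dots> = (\<lambda>a. ?E) ` ?E"
    using E.rcos_const[OF is_group] by (rule image_cong[OF HOL.refl])
  also have "\<dots> = {\<one>\<^bsub>G Mod ?E\<^esub>}"
    using image_constant[OF E.one_closed] by (simp add: one_FactGroup)
  finally show ?thesis
    by (simp add: metabelian_def)
qed

lemma derived_derived_eq_if_comm_Mod:
  assumes "comm_group (G Mod derived G (derived G (carrier G)))"
  shows "derived G (derived G (carrier G)) = derived G (carrier G)"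
proof
  show "derived G (derived G (carrier G)) \<subseteq> derived G (carrier G)"
    by (simp add: derived_incl derived_is_subgroup)
  show "derived G (carrier G) \<subseteq> derived G (derived G (carrier G))"
    using derived_minimal[OF derived_is_normal[OF derived_self_is_normal] assms] .
qed

end

lemma adjacent_eq_imp_eq_first:
  assumes "\<And>i. 1 \<le> i \<Longrightarrow> i < m \<Longrightarrow> a (Suc i) = a i" "1 \<le> i" "i \<le> m"
  shows "a i = a 1"
  using assms(2,3)
proof (induction i)
  case (Suc k)
  then show ?case
    using assms(1)[of k] by (cases "k = 0") auto
qed simp

fun eval_word :: "('a, 'b) monoid_scheme \<Rightarrow> (gen \<Rightarrow> 'a) \<Rightarrow> word \<Rightarrow> 'a" where
  "eval_word G f [] = \<one>\<^bsub>G\<^esub>"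
| "eval_word G f (l # w) =
     (if snd l then f (fst l) else inv\<^bsub>G\<^esub> f (fst l)) \<otimes>\<^bsub>G\<^esub> eval_word G f w"

context group
begin

lemma eval_word_closed:
  "\<forall>y \<in> set w. f (fst y) \<in> carrier G \<Longrightarrow> eval_word G f w \<in> carrier G"
  by (induction w) auto

lemma eval_word_in_generate:
  "S \<subseteq> carrier G \<Longrightarrow> \<forall>y \<in> set w. f (fst y) \<in> S \<Longrightarrow> eval_word G f w \<in> generate G S"
  by (induction w) (auto intro: generate.intros)

end

lemma (in group_hom) hom_eval_word:
  "\<forall>y \<in> set w. f (fst y) \<in> carrier G \<Longrightarrow> h (eval_word G f w) = eval_word H (h \<circ> f) w"
  by (induction w) (auto simp: G.eval_word_closed)

definition inverse_word :: "word \<Rightarrow> word" where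
  "inverse_word w = rev (map (\<lambda>(x, b). (x, \<not> b)) w)"

locale presentation =
  fixes V :: "gen \<Rightarrow> bool" and R :: "(word \<times> word) set"
  assumes relators_valid: "(u, v) \<in> R \<Longrightarrow> (\<forall>y \<in> set u. V (fst y)) \<and> (\<forall>y \<in> set v. V (fst y))"
begin

abbreviation valid :: "word \<Rightarrow> bool" where
  "valid w \<equiv> \<forall>y \<in> set w. V (fst y)"

abbreviation PG :: "word set monoid" where
  "PG \<equiv> presented_group V R"

definition word_class :: "word \<Rightarrow> word set" where
  "word_class w = {u. pres_eqv V R u w}"

definition generator :: "gen \<Rightarrow> word set" where
  "generator x = word_class (g x)"

lemma pres_eqv_valid: "pres_eqv V R u v \<Longrightarrow> valid u \<and> valid v"
  by (induction rule: pres_eqv.induct) (auto dest: relators_valid)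

lemma pres_eqv_append:
  assumes "pres_eqv V R u u'" "pres_eqv V R v v'"
  shows "pres_eqv V R (u @ v) (u' @ v')"
proof -
  have "valid v" "valid u'"
    using assms pres_eqv_valid by auto
  then have "pres_eqv V R ([] @ u @ v) ([] @ u' @ v)" "pres_eqv V R (u' @ v @ []) (u' @ v' @ [])"
    using assms by (intro pres_eqv.ctxt; simp)+
  then show ?thesis
    by (auto intro: pres_eqv.trans)
qed

lemma pres_eqv_inverse_word: "valid w \<Longrightarrow> pres_eqv V R (w @ inverse_word w) []"
proof (induction w)
  case Nil
  then show ?case
    by (simp add: inverse_word_def pres_eqv.refl)
next
  case (Cons l w)
  obtain x b where l: "l = (x, b)"
    by force
  have "pres_eqv V R ([(x, b)] @ (w @ inverse_word w) @ [(x, \<not> b)]) ([(x, b)] @ [] @ [(x, \<not> b)])"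
    using Cons l by (intro pres_eqv.ctxt) auto
  moreover have "pres_eqv V R [(x, b), (x, \<not> b)] []"
    using Cons.prems l by (intro pres_eqv.cancel) simp
  ultimately show ?case
    using l by (auto simp: inverse_word_def intro: pres_eqv.trans)
qed

lemma carrier_PG: "carrier PG = word_class ` {w. valid w}"
proof -
  have "{u. pres_eqv V R w u} = word_class w" for w
    unfolding word_class_def by (auto intro: pres_eqv.sym)
  then show ?thesis
    unfolding presented_group_def quotient_def by (auto simp: Image_def)
qed

lemma word_class_eq_iff:
  "valid u \<Longrightarrow> valid v \<Longrightarrow> word_class u = word_class v \<longleftrightarrow> pres_eqv V R u v"
  unfolding word_class_def by (auto intro: pres_eqv.sym pres_eqv.trans pres_eqv.refl)

lemma mult_word_class:
  "valid u \<Longrightarrow> valid v \<Longrightarrow> word_class u \<otimes>\<^bsub>PG\<^esub> word_class v = word_class (u @ v)"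
  unfolding presented_group_def word_class_def
  by (auto intro: pres_eqv.trans pres_eqv_append pres_eqv.refl)

lemma one_PG: "\<one>\<^bsub>PG\<^esub> = word_class []"
  by (simp add: presented_group_def word_class_def)

lemma group_PG: "group PG"
proof (rule groupI)
  show "\<one>\<^bsub>PG\<^esub> \<in> carrier PG"
    by (auto simp: carrier_PG one_PG)
next
  fix x y z
  assume "x \<in> carrier PG" "y \<in> carrier PG" "z \<in> carrier PG"
  then obtain u v w where uvw: "valid u" "valid v" "valid w"
    and "x = word_class u" "y = word_class v" "z = word_class w"
    by (auto simp: carrier_PG)
  moreover have "valid (u @ v)" "valid (v @ w)"
    using uvw by auto
  ultimately show "x \<otimes>\<^bsub>PG\<^esub> y \<in> carrier PG"
    and "x \<otimes>\<^bsub>PG\<^esub> y \<otimes>\<^bsub>PG\<^esub> z = x \<otimes>\<^bsub>PG\<^esub> (y \<otimes>\<^bsub>PG\<^esub> z)"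
    and "\<one>\<^bsub>PG\<^esub> \<otimes>\<^bsub>PG\<^esub> x = x"
    by (auto simp: carrier_PG mult_word_class one_PG)
next
  fix x
  assume "x \<in> carrier PG"
  then obtain w where w: "valid w" "x = word_class w"
    by (auto simp: carrier_PG)
  have inv_w: "valid (inverse_word w)" "inverse_word (inverse_word w) = w"
    using w(1) by (auto simp: inverse_word_def rev_map[symmetric] comp_def case_prod_beta)
  have "word_class (inverse_word w) \<otimes>\<^bsub>PG\<^esub> x = word_class (inverse_word w @ w)"
    using w inv_w by (simp add: mult_word_class)
  also have "\<dots> = \<one>\<^bsub>PG\<^esub>"
    using pres_eqv_inverse_word[OF inv_w(1)] inv_w w(1)
    by (simp add: word_class_eq_iff one_PG ball_Un)
  finally have "word_class (inverse_word w) \<otimes>\<^bsub>PG\<^esub> x = \<one>\<^bsub>PG\<^esub>" .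
  moreover have "word_class (inverse_word w) \<in> carrier PG"
    using inv_w by (auto simp: carrier_PG)
  ultimately show "\<exists>y \<in> carrier PG. y \<otimes>\<^bsub>PG\<^esub> x = \<one>\<^bsub>PG\<^esub>"
    by blast
qed

lemma generator_closed: "V x \<Longrightarrow> generator x \<in> carrier PG"
  by (auto simp: generator_def g_def carrier_PG)

lemma word_class_inverse_letter:
  assumes "V x"
  shows "word_class [(x, False)] = inv\<^bsub>PG\<^esub> generator x"
proof -
  interpret group PG
    by (rule group_PG)
  have "word_class [(x, False)] \<otimes>\<^bsub>PG\<^esub> generator x = \<one>\<^bsub>PG\<^esub>"
    using assms pres_eqv.cancel[where x = x and b = False]
    by (simp add: generator_def g_def mult_word_class one_PG word_class_eq_iff)
  then show ?thesis
    using assms generator_closed by (intro inv_equality[symmetric]) (auto simp: carrier_PG)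
qed

lemma eval_word_generator: "valid w \<Longrightarrow> eval_word PG generator w = word_class w"
proof (induction w)
  case Nil
  then show ?case
    by (simp add: one_PG)
next
  case (Cons l w)
  have "word_class [l] = (if snd l then generator (fst l) else inv\<^bsub>PG\<^esub> generator (fst l))"
    using Cons.prems by (cases l) (auto simp: word_class_inverse_letter generator_def g_def)
  then have "eval_word PG generator (l # w) = word_class [l] \<otimes>\<^bsub>PG\<^esub> word_class w"
    using Cons by simp
  then show ?case
    using Cons.prems mult_word_class[of "[l]" w] by simp
qed

lemma generators_satisfy_relators:
  "(u, v) \<in> R \<Longrightarrow> eval_word PG generator u = eval_word PG generator v"
  using relators_valid by (simp add: eval_word_generator word_class_eq_iff pres_eqv.rel)

lemma generate_generators: "generate PG (generator ` {x. V x}) = carrier PG"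
proof
  interpret group PG
    by (rule group_PG)
  show "generate PG (generator ` {x. V x}) \<subseteq> carrier PG"
    using generate_in_carrier[of "generator ` {x. V x}"] generator_closed by blast
  show "carrier PG \<subseteq> generate PG (generator ` {x. V x})"
  proof
    fix a
    assume "a \<in> carrier PG"
    then obtain w where "valid w" "a = eval_word PG generator w"
      by (auto simp: carrier_PG eval_word_generator)
    then show "a \<in> generate PG (generator ` {x. V x})"
      using generator_closed by (auto intro: eval_word_in_generate)
  qed
qed

end

lemma uw_rels_valid:
  "(u, v) \<in> uw_rels n c \<Longrightarrow> valid_word n c u \<and> valid_word n c v"
  unfolding uw_rels_def uv_rels_def valid_word_def
  by (elim UnE CollectE exE conjE; auto simp: g_def valid_gen_def)

lemma uv_rels_subset_uw_rels: "uv_rels n c \<subseteq> uw_rels n c"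
  by (auto simp: uw_rels_def)

locale uv_family = group G for G (structure) +
  fixes n c :: nat and f :: "gen \<Rightarrow> 'a"
  assumes generator_closed: "valid_gen n c x \<Longrightarrow> f x \<in> carrier G"
    and relators_hold: "(u, v) \<in> uv_rels n c \<Longrightarrow> eval_word G f u = eval_word G f v"
begin

lemma rho_closed [simp]: "1 \<le> i \<Longrightarrow> i \<le> n - 1 \<Longrightarrow> f (Rho i) \<in> carrier G"
  by (simp add: generator_closed valid_gen_def)

lemma sig_closed [simp]:
  "1 \<le> i \<Longrightarrow> i \<le> n - 1 \<Longrightarrow> 1 \<le> t \<Longrightarrow> t \<le> c \<Longrightarrow> f (Sig i t) \<in> carrier G"
  by (simp add: generator_closed valid_gen_def)

lemma rho_braid:
  assumes "1 \<le> i" "i \<le> n - 2"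
  shows "f (Rho i) \<otimes> (f (Rho (i + 1)) \<otimes> f (Rho i))
       = f (Rho (i + 1)) \<otimes> (f (Rho i) \<otimes> f (Rho (i + 1)))"
  using assms relators_hold[of "g (Rho i) @ g (Rho (i + 1)) @ g (Rho i)"]
  by (auto simp: uv_rels_def g_def)

lemma rho_commute:
  assumes "1 \<le> i" "i \<le> n - 1" "1 \<le> j" "j \<le> n - 1" "i \<ge> j + 2 \<or> j \<ge> i + 2"
  shows "f (Rho i) \<otimes> f (Rho j) = f (Rho j) \<otimes> f (Rho i)"
  using assms relators_hold[of "g (Rho i) @ g (Rho j)"]
  by (auto simp: uv_rels_def g_def)

lemma rho_square:
  assumes "1 \<le> i" "i \<le> n - 1"
  shows "f (Rho i) \<otimes> f (Rho i) = \<one>"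
  using assms relators_hold[of "g (Rho i) @ g (Rho i)"]
  by (auto simp: uv_rels_def g_def)

lemma sig_commute:
  assumes "1 \<le> i" "i \<le> n - 1" "1 \<le> j" "j \<le> n - 1" "i \<ge> j + 2 \<or> j \<ge> i + 2"
    and "1 \<le> t" "t \<le> c" "1 \<le> l" "l \<le> c"
  shows "f (Sig i t) \<otimes> f (Sig j l) = f (Sig j l) \<otimes> f (Sig i t)"
  using assms relators_hold[of "g (Sig i t) @ g (Sig j l)"]
  by (auto simp: uv_rels_def g_def)

lemma sig_rho_commute:
  assumes "1 \<le> i" "i \<le> n - 1" "1 \<le> j" "j \<le> n - 1" "i \<ge> j + 2 \<or> j \<ge> i + 2"
    and "1 \<le> t" "t \<le> c"
  shows "f (Sig i t) \<otimes> f (Rho j) = f (Rho j) \<otimes> f (Sig i t)"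
  using assms relators_hold[of "g (Sig i t) @ g (Rho j)"]
  by (auto simp: uv_rels_def g_def)

lemma rho_rho_sig:
  assumes "1 \<le> i" "i \<le> n - 2" "1 \<le> t" "t \<le> c"
  shows "f (Rho i) \<otimes> (f (Rho (i + 1)) \<otimes> f (Sig i t))
       = f (Sig (i + 1) t) \<otimes> (f (Rho i) \<otimes> f (Rho (i + 1)))"
  using assms relators_hold[of "g (Rho i) @ g (Rho (i + 1)) @ g (Sig i t)"]
  by (auto simp: uv_rels_def g_def)

lemma rcos_derived_rho:
  assumes "1 \<le> i" "i \<le> n - 1"
  shows "derived G (carrier G) #> f (Rho i) = derived G (carrier G) #> f (Rho 1)"
proof (rule adjacent_eq_imp_eq_first[where a = "\<lambda>i. derived G (carrier G) #> f (Rho i)"])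
  fix i
  assume i: "1 \<le> i" "i < n - 1"
  define k where "k = f (Rho i) \<otimes> f (Rho (i + 1))"
  have "f (Rho (i + 1)) = k \<otimes> f (Rho i) \<otimes> inv k"
    using i rho_braid[of i] by (simp add: k_def inv_solve_right m_assoc)
  then have "derived G (carrier G) #> f (Rho (Suc i))
      = derived G (carrier G) #> (k \<otimes> f (Rho i) \<otimes> inv k)"
    by simp
  also have "\<dots> = derived G (carrier G) #> f (Rho i)"
    using i by (simp add: k_def rcos_derived_conjugate)
  finally show "derived G (carrier G) #> f (Rho (Suc i)) = derived G (carrier G) #> f (Rho i)" .
qed (use assms in auto)

lemma rho_adjacent_commute_if_far:
  assumes "metabelian G"
    and i: "1 \<le> i" "i \<le> n - 2" and k: "1 \<le> k" "k \<le> n - 1" "k + 2 \<le> i \<or> i + 3 \<le> k"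
  shows "f (Rho i) \<otimes> f (Rho (i + 1)) = f (Rho (i + 1)) \<otimes> f (Rho i)"
proof (rule commute_if_quotients_commute)
  show "f (Rho i) \<otimes> f (Rho k) = f (Rho k) \<otimes> f (Rho i)"
    and "f (Rho (i + 1)) \<otimes> f (Rho k) = f (Rho k) \<otimes> f (Rho (i + 1))"
    using i k by (auto intro: rho_commute)
  have "f (Rho j) \<otimes> inv f (Rho k) \<in> derived G (carrier G)" if "1 \<le> j" "j \<le> n - 1" for j
    using that k rcos_derived_rho[of j] rcos_derived_rho[of k]
    by (simp flip: rcos_eq_iff add: derived_is_subgroup)
  then show "f (Rho i) \<otimes> inv f (Rho k) \<otimes> (f (Rho (i + 1)) \<otimes> inv f (Rho k))
      = f (Rho (i + 1)) \<otimes> inv f (Rho k) \<otimes> (f (Rho i) \<otimes> inv f (Rho k))"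
    using i assms(1) by (intro metabelian_derived_commute) auto
qed (use i k in auto)

lemma rho_eq_rho_one:
  assumes "metabelian G" "n \<ge> 5" "1 \<le> i" "i \<le> n - 1"
  shows "f (Rho i) = f (Rho 1)"
proof -
  have eq_next_if_commute: "f (Rho (Suc i)) = f (Rho i)"
    if i: "1 \<le> i" "i \<le> n - 2"
      and "f (Rho i) \<otimes> f (Rho (i + 1)) = f (Rho (i + 1)) \<otimes> f (Rho i)" for i
  proof -
    have "f (Rho i) = f (Rho (i + 1))"
      by (rule braid_relation_commuting_eq[OF _ _ rho_braid[OF i] that(3)]) (use i in auto)
    then show ?thesis
      by simp
  qed
  \<comment> \<open>For \<open>n = 5\<close> no \<open>\<rho>\<^sub>k\<close> commutes with both \<open>\<rho>\<^sub>2\<close> and \<open>\<rho>\<^sub>3\<close>;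
    that case goes through \<open>\<rho>\<^sub>2 = \<rho>\<^sub>1\<close>.\<close>
  have rho_2: "f (Rho 2) = f (Rho 1)"
    using eq_next_if_commute[of 1] rho_adjacent_commute_if_far[OF assms(1), of 1 4] assms(2)
    by (simp add: numeral_2_eq_2)
  have adjacent_commute: "f (Rho i) \<otimes> f (Rho (i + 1)) = f (Rho (i + 1)) \<otimes> f (Rho i)"
    if i: "1 \<le> i" "i \<le> n - 2" for i
  proof -
    consider "i = 1" | "i = 2" | "i \<ge> 3"
      using i by linarith
    then show ?thesis
    proof cases
      case 1
      then show ?thesis
        using rho_adjacent_commute_if_far[OF assms(1) i, of 4] assms(2) by simp
    next
      case 2
      then show ?thesis
        using rho_commute[of 1 3] rho_2 assms(2) by simp
    next
      case 3
      then show ?thesis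
        using rho_adjacent_commute_if_far[OF assms(1) i, of 1] assms(2) by simp
    qed
  qed
  have "f (Rho (Suc i)) = f (Rho i)" if "1 \<le> i" "i < n - 1" for i
    using that by (intro eq_next_if_commute adjacent_commute) auto
  then show ?thesis
    using assms(3,4) by (rule adjacent_eq_imp_eq_first)
qed

lemma sig_eq_sig_one:
  assumes "metabelian G" "n \<ge> 5" "1 \<le> i" "i \<le> n - 1" "1 \<le> t" "t \<le> c"
  shows "f (Sig i t) = f (Sig 1 t)"
proof (rule adjacent_eq_imp_eq_first[where a = "\<lambda>i. f (Sig i t)"])
  fix i
  assume i: "1 \<le> i" "i < n - 1"
  have "f (Rho i) = f (Rho 1)" "f (Rho (i + 1)) = f (Rho 1)"
    using i by (intro rho_eq_rho_one[OF assms(1,2)]; simp)+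
  moreover have "f (Rho 1) \<otimes> f (Rho 1) = \<one>"
    using assms(2) rho_square by simp
  ultimately show "f (Sig (Suc i) t) = f (Sig i t)"
    using rho_rho_sig[of i t] i assms(2,5,6) by (simp add: m_assoc[symmetric])
qed (use assms in auto)

lemma generators_commute:
  assumes "metabelian G" "n \<ge> 5" "valid_gen n c x" "valid_gen n c y"
  shows "f x \<otimes> f y = f y \<otimes> f x"
proof -
  have rho_3: "f (Rho 3) = f (Rho 1)"
    using assms(2) by (intro rho_eq_rho_one[OF assms(1,2)]) auto
  have sig_3: "f (Sig 3 t) = f (Sig 1 t)" if "1 \<le> t" "t \<le> c" for t
    using assms(2) that by (intro sig_eq_sig_one[OF assms(1,2)]) auto
  have rho_sig: "f (Rho 1) \<otimes> f (Sig 1 t) = f (Sig 1 t) \<otimes> f (Rho 1)" if "1 \<le> t" "t \<le> c" for t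
    using sig_rho_commute[of 1 3 t] rho_3 that assms(2) by simp
  have sig_sig: "f (Sig 1 t) \<otimes> f (Sig 1 l) = f (Sig 1 l) \<otimes> f (Sig 1 t)"
    if "1 \<le> t" "t \<le> c" "1 \<le> l" "l \<le> c" for t l
    using sig_commute[of 1 3 t l] sig_3[of l] that assms(2) by simp
  have normal_form: "f z = f (Rho 1) \<or> (\<exists>t. 1 \<le> t \<and> t \<le> c \<and> f z = f (Sig 1 t))"
    if "valid_gen n c z" for z
  proof (cases z)
    case (Rho i)
    then show ?thesis
      using that rho_eq_rho_one[OF assms(1,2), of i] by (simp add: valid_gen_def)
  next
    case (Sig i t)
    then show ?thesis
      using that sig_eq_sig_one[OF assms(1,2), of i t] by (auto simp: valid_gen_def)
  qed
  from normal_form[OF assms(3)] normal_form[OF assms(4)] show ?thesis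
    using rho_sig sig_sig by auto
qed

lemma uv_family_hom:
  assumes "group_hom G H h"
  shows "uv_family H n c (h \<circ> f)"
proof -
  interpret h: group_hom G H h
    by (fact assms)
  have letters_closed: "\<forall>y \<in> set w. f (fst y) \<in> carrier G" if "valid_word n c w" for w
    using that generator_closed by (auto simp: valid_word_def)
  show ?thesis
  proof (intro uv_family.intro uv_family_axioms.intro)
    show "group H"
      by (rule h.H.is_group)
    show "(h \<circ> f) x \<in> carrier H" if "valid_gen n c x" for x
      using that generator_closed by simp
    show "eval_word H (h \<circ> f) u = eval_word H (h \<circ> f) v" if "(u, v) \<in> uv_rels n c" for u v
    proof -
      have "valid_word n c u" "valid_word n c v"
        using that uv_rels_subset_uw_rels uw_rels_valid by blast+
      then show ?thesis
        using relators_hold[OF that] by (simp flip: h.hom_eval_word add: letters_closed)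
    qed
  qed
qed

theorem derived_derived_eq_derived:
  assumes "n \<ge> 5" and gen: "generate G (f ` {x. valid_gen n c x}) = carrier G"
  shows "derived G (derived G (carrier G)) = derived G (carrier G)"
proof -
  let ?E = "derived G (derived G (carrier G))"
  interpret E: normal ?E G
    using derived_is_normal[OF derived_self_is_normal] .
  interpret Q: group "G Mod ?E"
    by (rule E.factorgroup_is_group)
  interpret h: group_hom G "G Mod ?E" "\<lambda>a. ?E #> a"
    by unfold_locales (rule E.r_coset_hom_Mod)
  have Q_family: "uv_family (G Mod ?E) n c ((\<lambda>a. ?E #> a) \<circ> f)"
    by (rule uv_family_hom) (rule h.group_hom_axioms)
  have "generate (G Mod ?E) (((\<lambda>a. ?E #> a) \<circ> f) ` {x. valid_gen n c x}) = carrier (G Mod ?E)"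
    using h.generate_img[of "f ` {x. valid_gen n c x}"] gen generator_closed
    by (auto simp: image_comp carrier_FactGroup)
  then have "comm_group (G Mod ?E)"
    using uv_family.generators_commute[OF Q_family metabelian_Mod_derived_derived assms(1)]
      uv_family.generator_closed[OF Q_family]
    by (intro Q.comm_group_if_generated_by_commuting) auto
  then show ?thesis
    by (rule derived_derived_eq_if_comm_Mod)
qed

end

theorem theorem5p8:
  fixes n c :: nat
  assumes "n \<ge> 5" and "c \<ge> 1"
  shows "derived (UW n c) (derived (UW n c) (carrier (UW n c)))
         = derived (UW n c) (carrier (UW n c))"
proof -
  interpret presentation "valid_gen n c" "uw_rels n c"
    by unfold_locales (use uw_rels_valid in \<open>auto simp: valid_word_def\<close>)
  have "uv_family (UW n c) n c generator"
  proof (intro uv_family.intro uv_family_axioms.intro)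
    show "group (UW n c)"
      by (simp add: UW_def group_PG)
    show "generator x \<in> carrier (UW n c)" if "valid_gen n c x" for x
      using that by (simp add: UW_def generator_closed)
    show "eval_word (UW n c) generator u = eval_word (UW n c) generator v"
      if "(u, v) \<in> uv_rels n c" for u v
      using that uv_rels_subset_uw_rels generators_satisfy_relators unfolding UW_def by blast
  qed
  then show ?thesis
    using uv_family.derived_derived_eq_derived assms(1) generate_generators by (simp add: UW_def)
qed

end
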